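(* Let $G$ be a simple, undirected, connected graph on $N\ge 2$ vertices with edge set $E$ and degrees $d_i$, and let $$\sigma^2=\frac{2}{N}\sum_{(i,j)\in E}\frac{1}{d_id_j}=\frac{\mathrm{tr}(P^2)}{N},\qquad \sigma\ge 0.$$ Then $$R^+(G)\ge N\left[\frac{1}{1+\frac{\sigma}{\sqrt{N-1}}}+\frac{(N-2)^2}{N-1-\frac{\sigma}{\sqrt{N-1}}}\right]+(N-1)^2.$$
   Context: $P=(p(v,w))$ is the $N\times N$ transition matrix of the simple random walk on $G$: $p(v,w)=1/d_v$ if $v,w$ are adjacent and $0$ otherwise. For vertices $i,j$, $R_{ij}$ denotes the effective resistance between $i$ and $j$ when every edge is a unit resistor. The additive degree-Kirchhoff index is $R^+(G)=\sum_{i<j}(d_i+d_j)R_{ij}$. *)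

theory Defs
  imports Complex_Main
begin

definition simple_graph :: "nat \<Rightarrow> (nat \<Rightarrow> nat \<Rightarrow> bool) \<Rightarrow> bool" where
  "simple_graph N E \<longleftrightarrow>
     (\<forall>i j. E i j \<longrightarrow> i < N \<and> j < N) \<and>
     (\<forall>i j. E i j \<longrightarrow> E j i) \<and>
     (\<forall>i. \<not> E i i)"

definition connected_graph :: "nat \<Rightarrow> (nat \<Rightarrow> nat \<Rightarrow> bool) \<Rightarrow> bool" where
  "connected_graph N E \<longleftrightarrow> (\<forall>i<N. \<forall>j<N. E\<^sup>*\<^sup>* i j)"

definition deg :: "nat \<Rightarrow> (nat \<Rightarrow> nat \<Rightarrow> bool) \<Rightarrow> nat \<Rightarrow> nat" where
  "deg N E i = card {j. j < N \<and> E i j}"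

definition laplacian_apply :: "nat \<Rightarrow> (nat \<Rightarrow> nat \<Rightarrow> bool) \<Rightarrow> (nat \<Rightarrow> real) \<Rightarrow> nat \<Rightarrow> real" where
  "laplacian_apply N E x v = (\<Sum>w\<in>{w. w < N \<and> E v w}. x v - x w)"

text \<open>Effective resistance (unit resistors): inject unit current at i, extract it at j;
the resulting potential difference x_i - x_j (Kirchhoff's laws: L x = e_i - e_j).\<close>
definition eff_resistance :: "nat \<Rightarrow> (nat \<Rightarrow> nat \<Rightarrow> bool) \<Rightarrow> nat \<Rightarrow> nat \<Rightarrow> real" where
  "eff_resistance N E i j =
     (THE r. \<exists>x. (\<forall>v<N. laplacian_apply N E x v =
                         (if v = i then 1 else 0) - (if v = j then 1 else 0))
               \<and> r = x i - x j)"

definition additive_degree_kirchhoff :: "nat \<Rightarrow> (nat \<Rightarrow> nat \<Rightarrow> bool) \<Rightarrow> real" where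
  "additive_degree_kirchhoff N E =
     (\<Sum>(i, j)\<in>{(i, j). i < j \<and> j < N}.
        (real (deg N E i) + real (deg N E j)) * eff_resistance N E i j)"

definition sigma_sq :: "nat \<Rightarrow> (nat \<Rightarrow> nat \<Rightarrow> bool) \<Rightarrow> real" where
  "sigma_sq N E =
     (2 / real N) * (\<Sum>(i, j)\<in>{(i, j). i < j \<and> j < N \<and> E i j}.
                        1 / (real (deg N E i) * real (deg N E j)))"

end

theory Submission
  imports Defs "Jordan_Normal_Form.Determinant"
begin

text \<open>Testing the energy of the unit current from i to j against multiples of the dipole
  e_i - e_j (Thomson's principle) gives R_ij \<ge> 4 / (d_i + d_j + 2 [ij \<in> E]), hence
  R^+ \<ge> 2 (N - 1)^2 + 2 (\<Sum>_i 1/(d_i + 1) - 1). On the other side, AM-GM and the handshake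
  lemma give 1/(N - 1) \<le> \<sigma>^2 \<le> 1 and N \<sigma>^2 \<le> \<Sum>_i 1/d_i, and a vertexwise estimate bounds
  \<Sum>_i 1/d_i - N/(N - 1) by 3 (\<Sum>_i 1/(d_i + 1) - 1). What is left is an inequality in the
  single real variable x = \<sigma> / sqrt (N - 1) \<in> [1/(N - 1), 1].\<close>

definition arcs :: "nat \<Rightarrow> (nat \<Rightarrow> nat \<Rightarrow> bool) \<Rightarrow> (nat \<times> nat) set" where
  "arcs N E = {(v, w). v < N \<and> w < N \<and> E v w}"

definition laplacian_form ::
    "nat \<Rightarrow> (nat \<Rightarrow> nat \<Rightarrow> bool) \<Rightarrow> (nat \<Rightarrow> real) \<Rightarrow> (nat \<Rightarrow> real) \<Rightarrow> real" where
  "laplacian_form N E x y = (\<Sum>v<N. x v * laplacian_apply N E y v)"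

lemma finite_arcs: "finite (arcs N E)"
  by (rule finite_subset[of _ "{..<N} \<times> {..<N}"]) (auto simp: arcs_def)

lemma sum_arcs: "(\<Sum>v<N. \<Sum>w\<in>{w. w < N \<and> E v w}. f v w) = (\<Sum>(v, w)\<in>arcs N E. f v w)"
proof -
  have "arcs N E = Sigma {..<N} (\<lambda>v. {w. w < N \<and> E v w})"
    by (auto simp: arcs_def)
  then show ?thesis by (simp add: sum.Sigma)
qed

lemma sum_arcs_swap:
  assumes "simple_graph N E"
  shows "(\<Sum>(v, w)\<in>arcs N E. f v w) = (\<Sum>(v, w)\<in>arcs N E. f w v)"
proof -
  have "prod.swap ` arcs N E = arcs N E"
    using assms by (auto simp: arcs_def simple_graph_def image_iff)
  moreover have "inj_on prod.swap (arcs N E)"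
    by (rule inj_on_subset[OF _ subset_UNIV]) simp
  ultimately have "(\<Sum>p\<in>arcs N E. case_prod f p) = (\<Sum>p\<in>arcs N E. case_prod f (prod.swap p))"
    by (metis sum.reindex_cong)
  then show ?thesis
    by (simp add: case_prod_beta)
qed

lemma laplacian_form_arcs:
  assumes "simple_graph N E"
  shows "laplacian_form N E x y = (\<Sum>(v, w)\<in>arcs N E. (x v - x w) * (y v - y w)) / 2"
proof -
  have "laplacian_form N E x y = (\<Sum>(v, w)\<in>arcs N E. x v * (y v - y w))"
    unfolding laplacian_form_def laplacian_apply_def sum_distrib_left by (rule sum_arcs)
  moreover have "\<dots> = (\<Sum>(v, w)\<in>arcs N E. x w * (y w - y v))"
    by (rule sum_arcs_swap[OF assms])
  moreover have "(\<Sum>(v, w)\<in>arcs N E. (x v - x w) * (y v - y w)) =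
      (\<Sum>(v, w)\<in>arcs N E. x v * (y v - y w)) + (\<Sum>(v, w)\<in>arcs N E. x w * (y w - y v))"
    by (simp add: sum.distrib[symmetric] case_prod_beta algebra_simps)
  ultimately show ?thesis
    by simp
qed

lemma laplacian_form_quadratic_bound:
  assumes "simple_graph N E"
  shows "2 * t * laplacian_form N E x y \<le> t\<^sup>2 * laplacian_form N E x x + laplacian_form N E y y"
proof -
  have "2 * t * ((a - b) * (c - d)) \<le> t\<^sup>2 * ((a - b) * (a - b)) + (c - d) * (c - d)"
    for a b c d :: real
    using zero_le_power2[of "t * (a - b) - (c - d)"] by (simp add: power2_eq_square algebra_simps)
  then have "(\<Sum>(v, w)\<in>arcs N E. 2 * t * ((x v - x w) * (y v - y w)))
      \<le> (\<Sum>(v, w)\<in>arcs N E. t\<^sup>2 * ((x v - x w) * (x v - x w)) + (y v - y w) * (y v - y w))"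
    by (intro sum_mono) (simp add: case_prod_beta)
  then have "2 * t * (\<Sum>(v, w)\<in>arcs N E. (x v - x w) * (y v - y w))
      \<le> t\<^sup>2 * (\<Sum>(v, w)\<in>arcs N E. (x v - x w) * (x v - x w))
        + (\<Sum>(v, w)\<in>arcs N E. (y v - y w) * (y v - y w))"
    by (simp add: case_prod_beta sum.distrib sum_distrib_left)
  then show ?thesis
    by (simp add: laplacian_form_arcs[OF assms])
qed

lemma sum_laplacian_apply: "simple_graph N E \<Longrightarrow> (\<Sum>v<N. laplacian_apply N E y v) = 0"
  using laplacian_form_arcs[of N E "\<lambda>_. 1" y] by (simp add: laplacian_form_def)

lemma laplacian_kernel_const:
  assumes g: "simple_graph N E" and c: "connected_graph N E"
    and z: "\<forall>v<N. laplacian_apply N E z v = 0" and "a < N" "b < N"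
  shows "z a = z b"
proof -
  have "laplacian_form N E z z = 0"
    using z by (simp add: laplacian_form_def)
  then have "(\<Sum>(v, w)\<in>arcs N E. (z v - z w) * (z v - z w)) = 0"
    by (simp add: laplacian_form_arcs[OF g])
  then have "\<forall>p\<in>arcs N E. (\<lambda>(v, w). (z v - z w) * (z v - z w)) p = 0"
    by (subst sum_nonneg_eq_0_iff[OF finite_arcs, symmetric]) (auto simp: case_prod_beta)
  then have arc: "z v = z w" if "(v, w) \<in> arcs N E" for v w
    using that by fastforce
  have "E\<^sup>*\<^sup>* a b"
    using c \<open>a < N\<close> \<open>b < N\<close> by (auto simp: connected_graph_def)
  then show ?thesis
  proof (induction rule: rtranclp_induct)
    case (step u w)
    then have "(u, w) \<in> arcs N E"
      using g by (auto simp: arcs_def simple_graph_def)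
    with step.IH arc show ?case by simp
  qed simp
qed

lemma laplacian_apply_diff:
  "laplacian_apply N E (\<lambda>k. x k - y k) v = laplacian_apply N E x v - laplacian_apply N E y v"
  by (simp add: laplacian_apply_def sum_subtractf[symmetric] algebra_simps)

lemma laplacian_apply_matrix:
  assumes "simple_graph N E"
  shows "laplacian_apply N E x v =
    (\<Sum>w<N. (if v = w then real (deg N E v) else if E v w then -1 else 0) * x w)"
proof -
  have irr: "\<not> E u u" for u
    using assms by (auto simp: simple_graph_def)
  have deg0: "deg N E v = 0" if "\<not> v < N"
    using assms that by (auto simp: deg_def simple_graph_def)
  have "(\<Sum>w<N. (if v = w then real (deg N E v) else if E v w then -1 else 0) * x w)
      = (\<Sum>w<N. (if v = w then real (deg N E v) * x w else 0) + (if E v w then - x w else 0))"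
    by (rule sum.cong) (auto simp: irr)
  also have "\<dots> = (if v < N then real (deg N E v) * x v else 0) - (\<Sum>w\<in>{w. w < N \<and> E v w}. x w)"
    by (simp add: sum.distrib sum.inter_filter[symmetric] sum_negf Collect_conj_eq lessThan_def)
  also have "\<dots> = laplacian_apply N E x v"
    using deg0 by (cases "v < N") (simp_all add: laplacian_apply_def sum_subtractf deg_def)
  finally show ?thesis ..
qed

text \<open>The Laplacian with its equation at vertex 0 replaced by the normalisation z 0 = 0.\<close>
definition grounded_laplacian :: "nat \<Rightarrow> (nat \<Rightarrow> nat \<Rightarrow> bool) \<Rightarrow> real mat" where
  "grounded_laplacian N E = mat N N (\<lambda>(v, w). if v = 0 then (if w = 0 then 1 else 0)
      else if v = w then real (deg N E v) else if E v w then -1 else 0)"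

lemma grounded_laplacian_carrier: "grounded_laplacian N E \<in> carrier_mat N N"
  by (simp add: grounded_laplacian_def)

lemma grounded_laplacian_mult_vec:
  assumes g: "simple_graph N E" and "v < N" "z \<in> carrier_vec N"
  shows "(grounded_laplacian N E *\<^sub>v z) $ v
    = (if v = 0 then z $ 0 else laplacian_apply N E (\<lambda>k. z $ k) v)"
proof (cases "v = 0")
  case True
  then show ?thesis
    using assms by (simp add: grounded_laplacian_def scalar_prod_def lessThan_atLeast0
        if_distrib[of "\<lambda>a. a * _"] cong: if_cong)
next
  case False
  have "(grounded_laplacian N E *\<^sub>v z) $ v = (\<Sum>w<N. grounded_laplacian N E $$ (v, w) * z $ w)"
    using assms by (simp add: grounded_laplacian_def scalar_prod_def lessThan_atLeast0)
  also have "\<dots> = (\<Sum>w<N. (if v = w then real (deg N E v) else if E v w then -1 else 0) * z $ w)"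
    using assms False by (intro sum.cong) (auto simp: grounded_laplacian_def)
  finally show ?thesis
    using False by (simp add: laplacian_apply_matrix[OF g])
qed

lemma laplacian_equation_at_0:
  assumes g: "simple_graph N E" and "0 < N" and b: "(\<Sum>v<N. b v) = 0"
    and off_0: "\<forall>v<N. v \<noteq> 0 \<longrightarrow> laplacian_apply N E y v = b v"
  shows "\<forall>v<N. laplacian_apply N E y v = b v"
proof -
  have remove_0: "(\<Sum>v<N. f v) = f 0 + (\<Sum>v\<in>{..<N} - {0}. f v)" for f :: "nat \<Rightarrow> real"
    using \<open>0 < N\<close> by (intro sum.remove) auto
  have "(\<Sum>v\<in>{..<N} - {0}. laplacian_apply N E y v) = (\<Sum>v\<in>{..<N} - {0}. b v)"
    using off_0 by (intro sum.cong) auto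
  then have "laplacian_apply N E y 0 = b 0"
    using remove_0[of b] remove_0[of "laplacian_apply N E y"] b sum_laplacian_apply[OF g, of y]
    by linarith
  with off_0 show ?thesis
    by auto
qed

lemma det_grounded_laplacian:
  assumes g: "simple_graph N E" and c: "connected_graph N E" and "0 < N"
  shows "det (grounded_laplacian N E) \<noteq> 0"
proof -
  have "z = 0\<^sub>v N" if z: "z \<in> carrier_vec N" "grounded_laplacian N E *\<^sub>v z = 0\<^sub>v N" for z
  proof -
    have "laplacian_apply N E (\<lambda>k. z $ k) v = 0" if "v < N" "v \<noteq> 0" for v
      using grounded_laplacian_mult_vec[OF g that(1) z(1)] z(2) that by simp
    then have Lz: "\<forall>v<N. laplacian_apply N E (\<lambda>k. z $ k) v = 0"
      using laplacian_equation_at_0[OF g \<open>0 < N\<close>, of "\<lambda>_. 0"] by simp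
    have "z $ 0 = 0"
      using grounded_laplacian_mult_vec[OF g \<open>0 < N\<close> z(1)] z(2) \<open>0 < N\<close> by simp
    then have "z $ v = 0" if "v < N" for v
      using laplacian_kernel_const[OF g c Lz that \<open>0 < N\<close>] by simp
    then show ?thesis
      using z(1) by (intro eq_vecI) auto
  qed
  then show ?thesis
    using det_0_iff_vec_prod_zero[OF grounded_laplacian_carrier] by blast
qed

lemma laplacian_solvable:
  assumes g: "simple_graph N E" and c: "connected_graph N E" and b: "(\<Sum>v<N. b v) = 0"
  shows "\<exists>y. \<forall>v<N. laplacian_apply N E y v = b v"
proof (cases "N = 0")
  case False
  let ?M = "grounded_laplacian N E"
  obtain B where B: "B \<in> carrier_mat N N" "?M * B = 1\<^sub>m N"
    using det_non_zero_imp_unit[OF grounded_laplacian_carrier det_grounded_laplacian[OF g c], of N]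
      False by (auto simp: Units_def ring_mat_def)
  define r where "r = vec N (\<lambda>v. if v = 0 then 0 else b v)"
  have r: "r \<in> carrier_vec N"
    by (simp add: r_def)
  define z where "z = B *\<^sub>v r"
  have z: "z \<in> carrier_vec N"
    using B r by (simp add: z_def)
  have "?M *\<^sub>v z = r"
    unfolding z_def using B r grounded_laplacian_carrier[of N E]
    by (metis assoc_mult_mat_vec one_mult_mat_vec)
  then have "laplacian_apply N E (\<lambda>k. z $ k) v = b v" if "v < N" "v \<noteq> 0" for v
    using grounded_laplacian_mult_vec[OF g that(1) z] that by (simp add: r_def)
  then show ?thesis
    using laplacian_equation_at_0[OF g _ b] False by blast
qed simp

definition dipole :: "nat \<Rightarrow> nat \<Rightarrow> nat \<Rightarrow> real" where
  "dipole i j v = (if v = i then 1 else 0) - (if v = j then 1 else 0)"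

lemma sum_dipole:
  assumes "i < N" "j < N"
  shows "(\<Sum>v<N. dipole i j v * f v) = f i - f j"
proof -
  have "(\<Sum>v<N. dipole i j v * f v) = (\<Sum>v<N. (if v = i then f v else 0) - (if v = j then f v else 0))"
    by (intro sum.cong) (auto simp: dipole_def)
  then show ?thesis
    using assms by (simp add: sum_subtractf)
qed

lemma eff_resistance_eqI:
  assumes g: "simple_graph N E" and c: "connected_graph N E" and "i < N" "j < N"
    and y: "\<forall>v<N. laplacian_apply N E y v = dipole i j v"
  shows "eff_resistance N E i j = y i - y j"
  unfolding eff_resistance_def dipole_def[symmetric]
proof (rule the_equality)
  fix r
  assume "\<exists>x. (\<forall>v<N. laplacian_apply N E x v = dipole i j v) \<and> r = x i - x j"
  then obtain x where x: "\<forall>v<N. laplacian_apply N E x v = dipole i j v" and r: "r = x i - x j"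
    by blast
  have "\<forall>v<N. laplacian_apply N E (\<lambda>k. x k - y k) v = 0"
    using x y by (simp add: laplacian_apply_diff)
  then have "x i - y i = x j - y j"
    using laplacian_kernel_const[OF g c _ \<open>i < N\<close> \<open>j < N\<close>] by blast
  then show "r = y i - y j"
    by (simp add: r)
qed (use y in blast)

lemma laplacian_apply_dipole:
  assumes g: "simple_graph N E" and "i < N" "j < N" "i \<noteq> j"
  shows "laplacian_apply N E (dipole i j) i = real (deg N E i) + (if E i j then 1 else 0)"
    and "laplacian_apply N E (dipole i j) j = - real (deg N E j) - (if E i j then 1 else 0)"
proof -
  have irr: "\<not> E u u" and sym: "E j i = E i j" for u
    using g by (auto simp: simple_graph_def)
  have "laplacian_apply N E (dipole i j) i = (\<Sum>w\<in>{w. w < N \<and> E i w}. 1 + (if w = j then 1 else 0))"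
    unfolding laplacian_apply_def dipole_def by (rule sum.cong) (use irr assms(4) in auto)
  also have "\<dots> = real (deg N E i) + (if E i j then 1 else 0)"
    using \<open>j < N\<close> by (simp add: sum.distrib deg_def)
  finally show "laplacian_apply N E (dipole i j) i = real (deg N E i) + (if E i j then 1 else 0)" .
  have "laplacian_apply N E (dipole i j) j = (\<Sum>w\<in>{w. w < N \<and> E j w}. - 1 - (if w = i then 1 else 0))"
    unfolding laplacian_apply_def dipole_def by (rule sum.cong) (use irr assms(4) in auto)
  also have "\<dots> = - real (deg N E j) - (if E i j then 1 else 0)"
    using \<open>i < N\<close> by (simp add: sum_subtractf deg_def sym)
  finally show "laplacian_apply N E (dipole i j) j = - real (deg N E j) - (if E i j then 1 else 0)" .
qed

text \<open>Thomson's principle, tested against the potential 2/e times the dipole, where e is the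
  energy of the dipole.\<close>
lemma eff_resistance_ge:
  assumes g: "simple_graph N E" and c: "connected_graph N E" and ij: "i < N" "j < N" "i \<noteq> j"
  shows "4 / (real (deg N E i) + real (deg N E j) + (if E i j then 2 else 0)) \<le> eff_resistance N E i j"
proof -
  define e where "e = real (deg N E i) + real (deg N E j) + (if E i j then 2 else 0)"
  obtain y where y: "\<forall>v<N. laplacian_apply N E y v = dipole i j v"
    using laplacian_solvable[OF g c, of "dipole i j"] sum_dipole[OF ij(1,2), of "\<lambda>_. 1"] by auto
  have R: "eff_resistance N E i j = y i - y j"
    by (rule eff_resistance_eqI[OF g c ij(1,2) y])
  have "laplacian_form N E (dipole i j) (dipole i j) = e"
    using laplacian_apply_dipole[OF g ij]
    by (simp add: laplacian_form_def sum_dipole[OF ij(1,2)] e_def)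
  moreover have "laplacian_form N E (dipole i j) y = laplacian_apply N E y i - laplacian_apply N E y j"
    by (simp add: laplacian_form_def sum_dipole[OF ij(1,2)])
  moreover have "\<dots> = 2"
    using y ij by (simp add: dipole_def)
  moreover have "laplacian_form N E y y = eff_resistance N E i j"
    using y by (simp add: laplacian_form_def R mult.commute[of "y _"] sum_dipole[OF ij(1,2)])
  ultimately have bound: "4 * t \<le> t\<^sup>2 * e + eff_resistance N E i j" for t
    using laplacian_form_quadratic_bound[OF g, of t "dipole i j" y] by simp
  show ?thesis
  proof (cases "e = 0")
    case True
    then show ?thesis
      using bound[of 0] by (simp add: e_def)
  next
    case False
    moreover have "0 \<le> e"
      by (simp add: e_def)
    ultimately have "4 / e \<le> eff_resistance N E i j"
      using bound[of "2 / e"] by (simp add: power2_eq_square field_simps)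
    then show ?thesis
      by (simp add: e_def)
  qed
qed

lemma deg_less: "simple_graph N E \<Longrightarrow> i < N \<Longrightarrow> deg N E i < N"
proof -
  assume g: "simple_graph N E" and "i < N"
  then have "{j. j < N \<and> E i j} \<subseteq> {..<N} - {i}"
    by (auto simp: simple_graph_def)
  then have "deg N E i \<le> card ({..<N} - {i})"
    unfolding deg_def by (intro card_mono) auto
  with \<open>i < N\<close> show ?thesis
    by simp
qed

lemma deg_pos:
  assumes g: "simple_graph N E" and c: "connected_graph N E" and "2 \<le> N" "i < N"
  shows "0 < deg N E i"
proof -
  define j where "j = (if i = 0 then 1 else 0 :: nat)"
  have "j < N" "j \<noteq> i"
    using assms by (auto simp: j_def)
  then have "E\<^sup>*\<^sup>* i j"
    using c \<open>i < N\<close> by (auto simp: connected_graph_def)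
  then have "\<exists>k. E i k"
    using \<open>j \<noteq> i\<close> by (induction rule: converse_rtranclp_induct) auto
  then obtain k where "E i k" ..
  then have "k \<in> {j. j < N \<and> E i j}"
    using g by (auto simp: simple_graph_def)
  then show ?thesis
    unfolding deg_def by (auto simp: card_gt_0_iff)
qed

definition edges :: "nat \<Rightarrow> (nat \<Rightarrow> nat \<Rightarrow> bool) \<Rightarrow> (nat \<times> nat) set" where
  "edges N E = {(i, j). i < j \<and> j < N \<and> E i j}"

lemma sum_edges_handshake:
  fixes f :: "nat \<Rightarrow> real"
  assumes g: "simple_graph N E"
  shows "(\<Sum>(i, j)\<in>edges N E. f i + f j) = (\<Sum>i<N. real (deg N E i) * f i)"
proof -
  define edges' where "edges' = {(i, j). j < i \<and> i < N \<and> E i j}"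
  have irr: "\<not> E u u" and sym: "E u v \<Longrightarrow> E v u" for u v
    using g by (auto simp: simple_graph_def)
  have fin: "finite (edges N E)" "finite edges'"
    by (rule finite_subset[OF _ finite_arcs[of N E]], auto simp: edges_def edges'_def arcs_def)+
  have "arcs N E = edges N E \<union> edges'"
    using irr unfolding arcs_def edges_def edges'_def by (auto simp: not_less order.order_iff_strict)
  moreover have "edges N E \<inter> edges' = {}"
    by (auto simp: edges_def edges'_def)
  moreover have "edges' = prod.swap ` edges N E"
    unfolding edges_def edges'_def by (auto simp: image_iff dest: sym)
  then have "(\<Sum>(i, j)\<in>edges'. f i) = (\<Sum>(i, j)\<in>edges N E. f j)"
    by (simp add: sum.reindex case_prod_beta)
  ultimately have "(\<Sum>(i, j)\<in>edges N E. f i + f j) = (\<Sum>(i, j)\<in>arcs N E. f i)"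
    by (simp add: sum.union_disjoint[OF fin] sum.distrib case_prod_beta)
  also have "\<dots> = (\<Sum>i<N. real (deg N E i) * f i)"
    by (simp add: sum_arcs[symmetric] deg_def)
  finally show ?thesis .
qed

lemma card_pairs_less: "card {(i, j). i < j \<and> j < (N::nat)} * 2 = N * (N - 1)"
proof (induction N)
  case (Suc N)
  have split: "{(i, j). i < j \<and> j < Suc N} = {(i, j). i < j \<and> j < N} \<union> (\<lambda>i. (i, N)) ` {..<N}"
    by auto
  have "finite {(i, j). i < j \<and> j < (N::nat)}"
    by (rule finite_subset[of _ "{..<N} \<times> {..<N}"]) auto
  then have "card {(i, j). i < j \<and> j < Suc N} = card {(i, j). i < j \<and> j < N} + N"
    unfolding split by (subst card_Un_disjoint) (auto simp: card_image inj_on_def)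
  with Suc show ?case
    by (cases N) (auto simp: algebra_simps)
qed simp

lemma inverse_sum_ge:
  fixes p q :: real
  assumes "0 < p" "0 < q"
  shows "4 / (p + q) \<le> 1 / p + 1 / q"
proof -
  have "1 / p + 1 / q - 4 / (p + q) = (p - q)\<^sup>2 / (p * q * (p + q))"
    using assms by (simp add: field_simps power2_eq_square)
  moreover have "0 \<le> (p - q)\<^sup>2 / (p * q * (p + q))"
    using assms by simp
  ultimately show ?thesis
    by linarith
qed

lemma kirchhoff_term_ge:
  assumes g: "simple_graph N E" and c: "connected_graph N E" and "2 \<le> N" "i < j" "j < N"
  defines "d \<equiv> \<lambda>v. real (deg N E v)"
  shows "4 - (if E i j then 2 / (d i + 1) + 2 / (d j + 1) else 0) \<le> (d i + d j) * eff_resistance N E i j"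
proof -
  have ij: "i < N" "j < N" "i \<noteq> j"
    using assms by auto
  have d: "1 \<le> d i" "1 \<le> d j"
    using deg_pos[OF g c \<open>2 \<le> N\<close>] ij by (auto simp: d_def Suc_le_eq)
  then have "(d i + d j) * (4 / (d i + d j + 2)) = 4 - 2 * (4 / ((d i + 1) + (d j + 1)))"
    "(d i + d j) * (4 / (d i + d j)) = 4"
    by (simp_all add: field_simps)
  then have "4 - (if E i j then 2 / (d i + 1) + 2 / (d j + 1) else 0)
      \<le> (d i + d j) * (4 / (d i + d j + (if E i j then 2 else 0)))"
    using inverse_sum_ge[of "d i + 1" "d j + 1"] d by auto
  also have "\<dots> \<le> (d i + d j) * eff_resistance N E i j"
    using eff_resistance_ge[OF g c ij] d by (intro mult_left_mono) (auto simp: d_def)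
  finally show ?thesis .
qed

lemma additive_degree_kirchhoff_ge:
  assumes N: "2 \<le> N" and g: "simple_graph N E" and c: "connected_graph N E"
  shows "2 * (real N - 1)\<^sup>2 + 2 * ((\<Sum>i<N. 1 / (real (deg N E i) + 1)) - 1)
    \<le> additive_degree_kirchhoff N E"
proof -
  define d where "d = (\<lambda>v. real (deg N E v))"
  define P where "P = {(i, j). i < j \<and> j < (N::nat)}"
  have "finite P"
    unfolding P_def by (rule finite_subset[of _ "{..<N} \<times> {..<N}"]) auto
  have "real (card P * 2) = real (N * (N - 1))"
    unfolding P_def card_pairs_less ..
  then have card: "real (card P) * 2 = real N * (real N - 1)"
    using N by (simp add: of_nat_diff)
  have "2 * (real N - 1)\<^sup>2 + 2 * ((\<Sum>i<N. 1 / (d i + 1)) - 1)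
      = 2 * real N * (real N - 1) - (\<Sum>i<N. 2 - 2 / (d i + 1))"
    by (simp add: sum_subtractf sum_distrib_left power2_eq_square algebra_simps)
  also have "(\<Sum>i<N. 2 - 2 / (d i + 1)) = (\<Sum>i<N. d i * (2 / (d i + 1)))"
    using deg_pos[OF g c N] by (intro sum.cong) (auto simp: d_def field_simps)
  also have "\<dots> = (\<Sum>(i, j)\<in>edges N E. 2 / (d i + 1) + 2 / (d j + 1))"
    unfolding d_def by (rule sum_edges_handshake[OF g, symmetric])
  also have "\<dots> = (\<Sum>(i, j)\<in>P. if E i j then 2 / (d i + 1) + 2 / (d j + 1) else 0)"
    using \<open>finite P\<close>
    by (intro sum.mono_neutral_cong_left) (auto simp: P_def edges_def split: if_splits)
  also have "2 * real N * (real N - 1) - \<dots>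
      = (\<Sum>(i, j)\<in>P. 4 - (if E i j then 2 / (d i + 1) + 2 / (d j + 1) else 0))"
    using card by (simp add: sum_subtractf case_prod_beta)
  also have "\<dots> \<le> additive_degree_kirchhoff N E"
    unfolding additive_degree_kirchhoff_def P_def[symmetric]
  proof (intro sum_mono, clarify)
    fix i j
    assume "(i, j) \<in> P"
    then have "i < j" "j < N"
      by (auto simp: P_def)
    then show "4 - (if E i j then 2 / (d i + 1) + 2 / (d j + 1) else 0)
        \<le> (real (deg N E i) + real (deg N E j)) * eff_resistance N E i j"
      unfolding d_def by (rule kirchhoff_term_ge[OF g c N])
  qed
  finally show ?thesis
    by (simp add: d_def)
qed

lemma sigma_sq_edges:
  "sigma_sq N E = 2 / real N * (\<Sum>(i, j)\<in>edges N E. 1 / (real (deg N E i) * real (deg N E j)))"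
  by (simp add: sigma_sq_def edges_def)

lemma inverse_mult_le:
  fixes a b :: real
  shows "1 / (a * b) \<le> 1 / (2 * a * a) + 1 / (2 * b * b)"
proof -
  have "2 * ((1 / a) * (1 / b)) \<le> (1 / a)\<^sup>2 + (1 / b)\<^sup>2"
    using zero_le_power2[of "1 / a - 1 / b"] by (simp add: power2_diff)
  then show ?thesis
    by (simp add: power2_eq_square)
qed

lemma sigma_sq_le_sum_inverse_deg:
  assumes N: "2 \<le> N" and g: "simple_graph N E" and c: "connected_graph N E"
  shows "real N * sigma_sq N E \<le> (\<Sum>i<N. 1 / real (deg N E i))"
proof -
  define d where "d = (\<lambda>v. real (deg N E v))"
  have "(\<Sum>(i, j)\<in>edges N E. 1 / (d i * d j))
      \<le> (\<Sum>(i, j)\<in>edges N E. 1 / (2 * d i * d i) + 1 / (2 * d j * d j))"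
    by (intro sum_mono) (simp add: case_prod_beta inverse_mult_le)
  also have "\<dots> = (\<Sum>i<N. d i * (1 / (2 * d i * d i)))"
    unfolding d_def by (rule sum_edges_handshake[OF g])
  also have "\<dots> = (\<Sum>i<N. (1 / d i) / 2)"
    using deg_pos[OF g c N] by (intro sum.cong) (auto simp: d_def)
  also have "\<dots> = (\<Sum>i<N. 1 / d i) / 2"
    by (simp add: sum_divide_distrib)
  finally show ?thesis
    using N by (simp add: sigma_sq_edges d_def)
qed

lemma inverse_mult_ge:
  fixes a b m :: real
  assumes "1 \<le> a" "1 \<le> b" "a \<le> m" "b \<le> m"
  shows "1 / (2 * m * a) + 1 / (2 * m * b) \<le> 1 / (a * b)"
proof -
  have "1 / (m * a) \<le> 1 / (b * a)" "1 / (m * b) \<le> 1 / (a * b)"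
    using assms by (intro divide_left_mono mult_right_mono; simp)+
  then show ?thesis
    by (simp add: mult.commute)
qed

lemma sigma_sq_ge:
  assumes N: "2 \<le> N" and g: "simple_graph N E" and c: "connected_graph N E"
  shows "1 / (real N - 1) \<le> sigma_sq N E"
proof -
  define d where "d = (\<lambda>v. real (deg N E v))"
  have d: "1 \<le> d i" "d i \<le> real N - 1" if "i < N" for i
    using deg_pos[OF g c N that] deg_less[OF g that] by (auto simp: d_def)
  have "real N / (2 * (real N - 1)) = (\<Sum>i<N. 1 / (2 * (real N - 1)))"
    by simp
  also have "\<dots> = (\<Sum>i<N. d i * (1 / (2 * (real N - 1) * d i)))"
  proof (rule sum.cong)
    fix i
    assume "i \<in> {..<N}"
    then have "d i \<noteq> 0"
      using d(1)[of i] by auto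
    then show "1 / (2 * (real N - 1)) = d i * (1 / (2 * (real N - 1) * d i))"
      by simp
  qed simp
  also have "\<dots> = (\<Sum>(i, j)\<in>edges N E. 1 / (2 * (real N - 1) * d i) + 1 / (2 * (real N - 1) * d j))"
    unfolding d_def by (rule sum_edges_handshake[OF g, symmetric])
  also have "\<dots> \<le> (\<Sum>(i, j)\<in>edges N E. 1 / (d i * d j))"
  proof (intro sum_mono, clarify)
    fix i j
    assume "(i, j) \<in> edges N E"
    then show "1 / (2 * (real N - 1) * d i) + 1 / (2 * (real N - 1) * d j) \<le> 1 / (d i * d j)"
      using d by (intro inverse_mult_ge) (auto simp: edges_def)
  qed
  finally show ?thesis
    using N by (simp add: sigma_sq_edges d_def field_simps)
qed

lemma inverse_gap_le:
  fixes d n :: nat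
  assumes "1 \<le> d" "d < n"
  shows "1 / real d - 1 / (real n - 1) \<le> 3 * (1 / (real d + 1) - 1 / real n)"
proof (cases "d = n - 1")
  case True
  then show ?thesis
    using assms by (simp add: of_nat_diff)
next
  case False
  with assms have d: "1 \<le> real d" "real d + 1 < real n" and n: "3 \<le> real n"
    by linarith+
  have "real n * (real d + 1) \<le> 3 * real d * (real n - 1)"
  proof -
    have "3 * real d * (real n - 1) - real n * (real d + 1) = (real d - 1) * (2 * real n - 3) + (real n - 3)"
      by (simp add: algebra_simps)
    moreover have "0 \<le> (real d - 1) * (2 * real n - 3)"
      using d n by simp
    ultimately show ?thesis
      using n by linarith
  qed
  then have "(real n - 1 - real d) * (1 / (real d * (real n - 1)))
      \<le> (real n - 1 - real d) * (3 / (real n * (real d + 1)))"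
    using d n by (intro mult_left_mono) (simp_all add: divide_simps)
  moreover have "1 / real d - 1 / (real n - 1) = (real n - 1 - real d) * (1 / (real d * (real n - 1)))"
    "3 * (1 / (real d + 1) - 1 / real n) = (real n - 1 - real d) * (3 / (real n * (real d + 1)))"
    using d n by (simp_all add: field_simps)
  ultimately show ?thesis
    by simp
qed

lemma sum_inverse_deg_le:
  assumes N: "2 \<le> N" and g: "simple_graph N E" and c: "connected_graph N E"
  shows "(\<Sum>i<N. 1 / real (deg N E i)) - real N / (real N - 1)
    \<le> 3 * ((\<Sum>i<N. 1 / (real (deg N E i) + 1)) - 1)"
proof -
  have "(\<Sum>i<N. 1 / real (deg N E i) - 1 / (real N - 1))
      \<le> (\<Sum>i<N. 3 * (1 / (real (deg N E i) + 1) - 1 / real N))"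
    using deg_pos[OF g c N] deg_less[OF g]
    by (intro sum_mono inverse_gap_le) (auto simp: Suc_le_eq)
  then show ?thesis
    using N by (simp add: sum_subtractf sum_distrib_left)
qed

lemma sigma_sq_le_one:
  assumes N: "2 \<le> N" and g: "simple_graph N E" and c: "connected_graph N E"
  shows "sigma_sq N E \<le> 1"
proof -
  have "(\<Sum>i<N. 1 / real (deg N E i)) \<le> (\<Sum>i<N. 1)"
    using deg_pos[OF g c N] by (intro sum_mono) (simp add: Suc_le_eq)
  then have "real N * sigma_sq N E \<le> real N * 1"
    using sigma_sq_le_sum_inverse_deg[OF N g c] by simp
  then show ?thesis
    using N by simp
qed

definition kirchhoff_bound :: "real \<Rightarrow> real \<Rightarrow> real" where
  "kirchhoff_bound n x = n * (1 / (1 + x) + (n - 2)\<^sup>2 / (n - 1 - x)) + (n - 1)\<^sup>2"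

lemma kirchhoff_bound_eq:
  fixes n x :: real
  assumes "0 \<le> x" "x < n - 1"
  shows "kirchhoff_bound n x = 2 * (n - 1)\<^sup>2 + ((n - 1) * x - 1)\<^sup>2 / ((n - 1 - x) * (1 + x))"
proof -
  define a b where "a = 1 + x" and "b = n - 1 - x"
  have "a \<noteq> 0" "b \<noteq> 0"
    using assms by (auto simp: a_def b_def)
  moreover have nx: "n = b + a" "x = a - 1"
    by (simp_all add: a_def b_def)
  ultimately show ?thesis
    unfolding kirchhoff_bound_def nx by (simp add: field_simps power2_eq_square)
qed

lemma power2_div_le_mult:
  fixes n w :: real
  assumes n: "3 \<le> n" and "0 \<le> w"
  shows "w\<^sup>2 / (n - 2) \<le> 2 * n / (3 * (n - 1)) * (w * (w + 2))"
proof -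
  have "2 * n * (n - 2) - 3 * (n - 1) = (2 * n - 1) * (n - 3)"
    by (simp add: algebra_simps)
  moreover have "0 \<le> (2 * n - 1) * (n - 3)"
    using n by simp
  ultimately have "3 * (n - 1) \<le> 2 * n * (n - 2)"
    by linarith
  moreover have "w\<^sup>2 \<le> w * (w + 2)"
    using \<open>0 \<le> w\<close> unfolding power2_eq_square by (intro mult_left_mono) auto
  moreover have "0 \<le> 2 * n * (n - 2)"
    using n by simp
  ultimately have "3 * (n - 1) * w\<^sup>2 \<le> 2 * n * (n - 2) * (w * (w + 2))"
    by (rule mult_mono) auto
  then show ?thesis
    using n by (simp add: field_simps)
qed

lemma kirchhoff_bound_le:
  fixes n x :: real
  assumes n: "3 \<le> n" and x: "1 / (n - 1) \<le> x" "x \<le> 1"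
  shows "kirchhoff_bound n x \<le> 2 * (n - 1)\<^sup>2 + 2 / 3 * (n * ((n - 1) * x\<^sup>2) - n / (n - 1))"
proof -
  define w where "w = (n - 1) * x - 1"
  have "0 \<le> w"
    using n x by (simp add: w_def divide_le_eq mult.commute)
  have "0 < 1 / (n - 1)"
    using n by simp
  then have "0 \<le> x"
    using x by linarith
  then have "x\<^sup>2 \<le> 1"
    using x by (simp add: power_le_one)
  have "(n - 1 - x) * (1 + x) - (n - 2) = (1 - x\<^sup>2) + (n - 2) * x"
    by (simp add: algebra_simps power2_eq_square)
  moreover have "0 \<le> (n - 2) * x"
    using n \<open>0 \<le> x\<close> by simp
  ultimately have denom: "n - 2 \<le> (n - 1 - x) * (1 + x)"
    using \<open>x\<^sup>2 \<le> 1\<close> by linarith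
  have "w\<^sup>2 / (n - 2) \<le> 2 * n / (3 * (n - 1)) * (w * (w + 2))"
    using n \<open>0 \<le> w\<close> by (rule power2_div_le_mult)
  moreover have "w\<^sup>2 / ((n - 1 - x) * (1 + x)) \<le> w\<^sup>2 / (n - 2)"
    using n denom by (intro divide_left_mono) auto
  ultimately have "w\<^sup>2 / ((n - 1 - x) * (1 + x)) \<le> 2 * n / (3 * (n - 1)) * (w * (w + 2))"
    by linarith
  moreover have "2 * n / (3 * (n - 1)) * (w * (w + 2)) = 2 / 3 * (n * ((n - 1) * x\<^sup>2) - n / (n - 1))"
    using n by (simp add: w_def field_simps power2_eq_square)
  moreover have "kirchhoff_bound n x = 2 * (n - 1)\<^sup>2 + w\<^sup>2 / ((n - 1 - x) * (1 + x))"
    unfolding w_def using \<open>0 \<le> x\<close> x n by (intro kirchhoff_bound_eq) auto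
  ultimately show ?thesis
    by linarith
qed

lemma kirchhoff_bound_sqrt_le:
  fixes n :: nat and s :: real
  assumes n: "2 \<le> n" and s: "1 / (real n - 1) \<le> s" "s \<le> 1"
  shows "kirchhoff_bound (real n) (sqrt s / sqrt (real n - 1))
    \<le> 2 * (real n - 1)\<^sup>2 + 2 / 3 * (real n * s - real n / (real n - 1))"
proof (cases "n = 2")
  case True
  txt \<open>Here the second fraction of the bound is 0 / 0 = 0.\<close>
  then have "s = 1"
    using s by simp
  with True show ?thesis
    by (simp add: kirchhoff_bound_def)
next
  case False
  with n have n3: "3 \<le> real n"
    by simp
  define x where "x = sqrt s / sqrt (real n - 1)"
  have x_eq: "x = sqrt (s / (real n - 1))"
    by (simp add: x_def real_sqrt_divide)
  have "(1 / (real n - 1)) / (real n - 1) \<le> s / (real n - 1)"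
    using s n3 by (intro divide_right_mono) auto
  then have "sqrt ((1 / (real n - 1))\<^sup>2) \<le> x"
    unfolding x_eq by (intro real_sqrt_le_mono) (simp add: power2_eq_square)
  then have lower: "1 / (real n - 1) \<le> x"
    using n3 by simp
  have upper: "x \<le> 1"
    unfolding x_eq using s n3 by simp
  have "(real n - 1) * x\<^sup>2 = s"
    unfolding x_eq using s n3 by (simp add: order_trans[OF _ s(1)])
  then show ?thesis
    using kirchhoff_bound_le[OF n3 lower upper] unfolding x_def[symmetric] by simp
qed

theorem theorem5:
  fixes N :: nat and E :: "nat \<Rightarrow> nat \<Rightarrow> bool"
  assumes "N \<ge> 2" and "simple_graph N E" and "connected_graph N E"
  defines "\<sigma> \<equiv> sqrt (sigma_sq N E)"
  shows "additive_degree_kirchhoff N E \<ge>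
           real N * (1 / (1 + \<sigma> / sqrt (real N - 1))
                     + (real N - 2)\<^sup>2 / (real N - 1 - \<sigma> / sqrt (real N - 1)))
           + (real N - 1)\<^sup>2"
proof -
  let ?s = "sigma_sq N E"
  have "kirchhoff_bound (real N) (\<sigma> / sqrt (real N - 1))
      \<le> 2 * (real N - 1)\<^sup>2 + 2 / 3 * (real N * ?s - real N / (real N - 1))"
    unfolding \<sigma>_def using assms sigma_sq_ge sigma_sq_le_one by (intro kirchhoff_bound_sqrt_le) auto
  also have "\<dots> \<le> 2 * (real N - 1)\<^sup>2 + 2 * ((\<Sum>i<N. 1 / (real (deg N E i) + 1)) - 1)"
  proof -
    have "real N * ?s - real N / (real N - 1) \<le> 3 * ((\<Sum>i<N. 1 / (real (deg N E i) + 1)) - 1)"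
      using sigma_sq_le_sum_inverse_deg[OF assms(1-3)] sum_inverse_deg_le[OF assms(1-3)] by linarith
    then show ?thesis
      by simp
  qed
  also have "\<dots> \<le> additive_degree_kirchhoff N E"
    using additive_degree_kirchhoff_ge[OF assms(1-3)] .
  finally show ?thesis
    by (simp add: kirchhoff_bound_def)
qed

end
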